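(* Let $k$ be a commutative ring and $A$ a $k$-algebra. Let $(\mathcal D\overset{l}{\underset{r}{\leftrightarrows}}\mathcal C,\theta)$ be an $A$-coring twisting datum, where $\mathcal C=(C,\Delta_C,e_C)$ and $\mathcal D=(D,\Delta_D,e_D)$. Suppose that $e_D\circ\theta^{-1}$ is invertible in the convolution algebra ${}_A\mathrm{Hom}_A(C,A)$ and $e_C\circ\theta$ is invertible in the convolution algebra ${}_A\mathrm{Hom}_A(D,A)$. Then the $A$-corings $\mathcal C$ and $\mathcal D$ are isomorphic.
   Context: An $A$-coring $(C,\Delta_C,e_C)$ is an $A$-bimodule $C$ with $A$-bimodule maps $\Delta_C:C\to C\otimes_AC$ (coassociative) and $e_C:C\to A$ (counital). A map of $A$-corings is an $A$-bimodule map compatible with comultiplications and counits. An $A$-coring twisting datum consists of $A$-corings $\mathcal C,\mathcal D$, $A$-coring maps $l:D\to C$ and $r:C\to D$, and an isomorphism of $\mathcal D$-$\mathcal C$-bicomodules $\theta:D^l\to{}^rC$, where $D^l$ is $D$ with left $\mathcal D$-coaction $\Delta_D$ and right $\mathcal C$-coaction $(D\otimes_Al)\Delta_D$, and ${}^rC$ is $C$ with left $\mathcal D$-coaction $(r\otimes_AC)\Delta_C$ and right $\mathcal C$-coaction $\Delta_C$. For an $A$-coring $C$, ${}_A\mathrm{Hom}_A(C,A)$ denotes the $A$-bimodule maps $C\to A$, an algebra under the convolution product $f*g=\mu_A\circ(f\otimes_Ag)\circ\Delta_C$ (with $\mu_A:A\otimes_AA\to A$ the multiplication) and unit $e_C$.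 *)

theory Defs
  imports "HOL-Library.Function_Algebras"
begin

definition isc :: "int \<Rightarrow> 'm::ab_group_add \<Rightarrow> 'm" where
  "isc n x = (if 0 \<le> n then (\<Sum>i<nat n. x) else - (\<Sum>i<nat (- n). x))"

definition fsupp :: "('x \<Rightarrow> int) \<Rightarrow> bool" where
  "fsupp p \<longleftrightarrow> finite {z. p z \<noteq> 0}"

definition fsum :: "('x \<Rightarrow> int) \<Rightarrow> ('x \<Rightarrow> 'm::ab_group_add) \<Rightarrow> 'm" where
  "fsum p g = (\<Sum>z\<in>{z. p z \<noteq> 0}. isc (p z) (g z))"

definition gen :: "'x \<Rightarrow> 'x \<Rightarrow> int" where
  "gen z = (\<lambda>w. if w = z then 1 else 0)"

definition bimodule :: "('a::ring_1 \<Rightarrow> 'm::ab_group_add \<Rightarrow> 'm) \<Rightarrow> ('m \<Rightarrow> 'a \<Rightarrow> 'm) \<Rightarrow> bool" where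
  "bimodule la ra \<longleftrightarrow>
     (\<forall>a x y. la a (x + y) = la a x + la a y) \<and> (\<forall>a b x. la (a + b) x = la a x + la b x) \<and>
     (\<forall>a b x. la (a * b) x = la a (la b x)) \<and> (\<forall>x. la 1 x = x) \<and>
     (\<forall>a x y. ra (x + y) a = ra x a + ra y a) \<and> (\<forall>a b x. ra x (a + b) = ra x a + ra x b) \<and>
     (\<forall>a b x. ra x (a * b) = ra (ra x a) b) \<and> (\<forall>x. ra x 1 = x) \<and>
     (\<forall>a b x. ra (la a x) b = la a (ra x b))"

definition bimod_map :: "('a::ring_1 \<Rightarrow> 'm::ab_group_add \<Rightarrow> 'm) \<Rightarrow> ('m \<Rightarrow> 'a \<Rightarrow> 'm) \<Rightarrow>
    ('a \<Rightarrow> 'n::ab_group_add \<Rightarrow> 'n) \<Rightarrow> ('n \<Rightarrow> 'a \<Rightarrow> 'n) \<Rightarrow> ('m \<Rightarrow> 'n) \<Rightarrow> bool" where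
  "bimod_map laM raM laN raN f \<longleftrightarrow>
     (\<forall>x y. f (x + y) = f x + f y) \<and> (\<forall>a x. f (laM a x) = laN a (f x)) \<and>
     (\<forall>x a. f (raM x a) = raN (f x) a)"

text \<open>M \<otimes>_A N is the free abelian group on M \<times> N modulo the subgroup tens_rel;
  an element of M \<otimes>_A N is represented by a finitely supported p, and two
  representatives are equal in M \<otimes>_A N iff their difference lies in tens_rel.\<close>
inductive_set tens_rel :: "('m::ab_group_add \<Rightarrow> 'a::ring_1 \<Rightarrow> 'm) \<Rightarrow> ('a \<Rightarrow> 'n::ab_group_add \<Rightarrow> 'n)
    \<Rightarrow> ('m \<times> 'n \<Rightarrow> int) set" for raM laN where
  tr_zero: "0 \<in> tens_rel raM laN"
| tr_diff: "p \<in> tens_rel raM laN \<Longrightarrow> q \<in> tens_rel raM laN \<Longrightarrow> p - q \<in> tens_rel raM laN"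
| tr_addl: "gen (x + x', y) - gen (x, y) - gen (x', y) \<in> tens_rel raM laN"
| tr_addr: "gen (x, y + y') - gen (x, y) - gen (x, y') \<in> tens_rel raM laN"
| tr_bal: "gen (raM x a, y) - gen (x, laN a y) \<in> tens_rel raM laN"

inductive_set tens3_rel :: "('m::ab_group_add \<Rightarrow> 'a::ring_1 \<Rightarrow> 'm) \<Rightarrow> ('a \<Rightarrow> 'm \<Rightarrow> 'm)
    \<Rightarrow> ('m \<times> 'm \<times> 'm \<Rightarrow> int) set" for ra la where
  t3_zero: "0 \<in> tens3_rel ra la"
| t3_diff: "p \<in> tens3_rel ra la \<Longrightarrow> q \<in> tens3_rel ra la \<Longrightarrow> p - q \<in> tens3_rel ra la"
| t3_add1: "gen (x + x', y, z) - gen (x, y, z) - gen (x', y, z) \<in> tens3_rel ra la"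
| t3_add2: "gen (x, y + y', z) - gen (x, y, z) - gen (x, y', z) \<in> tens3_rel ra la"
| t3_add3: "gen (x, y, z + z') - gen (x, y, z) - gen (x, y, z') \<in> tens3_rel ra la"
| t3_bal1: "gen (ra x a, y, z) - gen (x, la a y, z) \<in> tens3_rel ra la"
| t3_bal2: "gen (x, ra y a, z) - gen (x, y, la a z) \<in> tens3_rel ra la"

definition tens_lact :: "('a \<Rightarrow> 'm \<Rightarrow> 'm) \<Rightarrow> 'a \<Rightarrow> ('m \<times> 'n \<Rightarrow> int) \<Rightarrow> ('m \<times> 'n \<Rightarrow> int)" where
  "tens_lact la a p = fsum p (\<lambda>(x, y). gen (la a x, y))"

definition tens_ract :: "('n \<Rightarrow> 'a \<Rightarrow> 'n) \<Rightarrow> ('m \<times> 'n \<Rightarrow> int) \<Rightarrow> 'a \<Rightarrow> ('m \<times> 'n \<Rightarrow> int)" where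
  "tens_ract ra p a = fsum p (\<lambda>(x, y). gen (x, ra y a))"

definition map_tens :: "('m \<Rightarrow> 'm2) \<Rightarrow> ('n \<Rightarrow> 'n2) \<Rightarrow> ('m \<times> 'n \<Rightarrow> int) \<Rightarrow> ('m2 \<times> 'n2 \<Rightarrow> int)" where
  "map_tens f g p = fsum p (\<lambda>(x, y). gen (f x, g y))"

record ('a, 'c) coring =
  lact :: "'a \<Rightarrow> 'c \<Rightarrow> 'c"
  ract :: "'c \<Rightarrow> 'a \<Rightarrow> 'c"
  comul :: "'c \<Rightarrow> ('c \<times> 'c \<Rightarrow> int)"
  counit :: "'c \<Rightarrow> 'a"

definition is_coring :: "('a::ring_1, 'c::ab_group_add) coring \<Rightarrow> bool" where
  "is_coring C \<longleftrightarrow>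
     bimodule (lact C) (ract C) \<and>
     (\<forall>c. fsupp (comul C c)) \<and>
     \<comment> \<open>comultiplication is an A-bimodule map C \<rightarrow> C \<otimes>_A C\<close>
     (\<forall>x y. comul C (x + y) - comul C x - comul C y \<in> tens_rel (ract C) (lact C)) \<and>
     (\<forall>a x. comul C (lact C a x) - tens_lact (lact C) a (comul C x) \<in> tens_rel (ract C) (lact C)) \<and>
     (\<forall>a x. comul C (ract C x a) - tens_ract (ract C) (comul C x) a \<in> tens_rel (ract C) (lact C)) \<and>
     \<comment> \<open>counit is an A-bimodule map C \<rightarrow> A\<close>
     bimod_map (lact C) (ract C) (*) (*) (counit C) \<and>
     \<comment> \<open>coassociativity\<close>
     (\<forall>c. fsum (comul C c) (\<lambda>(x, y). fsum (comul C x) (\<lambda>(u, v). gen (u, v, y)))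
          - fsum (comul C c) (\<lambda>(x, y). fsum (comul C y) (\<lambda>(u, v). gen (x, u, v)))
          \<in> tens3_rel (ract C) (lact C)) \<and>
     \<comment> \<open>counitality\<close>
     (\<forall>c. fsum (comul C c) (\<lambda>(x, y). lact C (counit C x) y) = c) \<and>
     (\<forall>c. fsum (comul C c) (\<lambda>(x, y). ract C x (counit C y)) = c)"

definition coring_map :: "('a::ring_1, 'c::ab_group_add) coring \<Rightarrow> ('a, 'd::ab_group_add) coring
    \<Rightarrow> ('c \<Rightarrow> 'd) \<Rightarrow> bool" where
  "coring_map C D f \<longleftrightarrow>
     bimod_map (lact C) (ract C) (lact D) (ract D) f \<and>
     (\<forall>c. map_tens f f (comul C c) - comul D (f c) \<in> tens_rel (ract D) (lact D)) \<and>
     (\<forall>c. counit D (f c) = counit C c)"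

text \<open>A-coring twisting datum (D \<leftrightarrows> C with maps l : D \<rightarrow> C, r : C \<rightarrow> D, and
  an isomorphism of D-C-bicomodules \<theta> : D^l \<rightarrow> ^rC).\<close>
definition twisting_datum :: "('a::ring_1, 'c::ab_group_add) coring \<Rightarrow> ('a, 'd::ab_group_add) coring
    \<Rightarrow> ('d \<Rightarrow> 'c) \<Rightarrow> ('c \<Rightarrow> 'd) \<Rightarrow> ('d \<Rightarrow> 'c) \<Rightarrow> bool" where
  "twisting_datum C D l r \<theta> \<longleftrightarrow>
     is_coring C \<and> is_coring D \<and> coring_map D C l \<and> coring_map C D r \<and>
     bij \<theta> \<and> bimod_map (lact D) (ract D) (lact C) (ract C) \<theta> \<and>
     \<comment> \<open>left D-colinearity: (D \<otimes> \<theta>) \<circ> \<Delta>_D = (r \<otimes> C) \<circ> \<Delta>_C \<circ> \<theta>\<close>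
     (\<forall>d. map_tens id \<theta> (comul D d) - map_tens r id (comul C (\<theta> d)) \<in> tens_rel (ract D) (lact C)) \<and>
     \<comment> \<open>right C-colinearity: (\<theta> \<otimes> C) \<circ> (D \<otimes> l) \<circ> \<Delta>_D = \<Delta>_C \<circ> \<theta>\<close>
     (\<forall>d. map_tens \<theta> id (map_tens id l (comul D d)) - comul C (\<theta> d) \<in> tens_rel (ract C) (lact C))"

definition hom_AA :: "('a::ring_1, 'c::ab_group_add) coring \<Rightarrow> ('c \<Rightarrow> 'a) set" where
  "hom_AA C = {f. bimod_map (lact C) (ract C) (*) (*) f}"

definition conv :: "('a::ring_1, 'c::ab_group_add) coring \<Rightarrow> ('c \<Rightarrow> 'a) \<Rightarrow> ('c \<Rightarrow> 'a) \<Rightarrow> ('c \<Rightarrow> 'a)" where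
  "conv C f g = (\<lambda>c. fsum (comul C c) (\<lambda>(x, y). f x * g y))"

definition conv_invertible :: "('a::ring_1, 'c::ab_group_add) coring \<Rightarrow> ('c \<Rightarrow> 'a) \<Rightarrow> bool" where
  "conv_invertible C f \<longleftrightarrow> f \<in> hom_AA C \<and>
     (\<exists>g \<in> hom_AA C. conv C f g = counit C \<and> conv C g f = counit C)"

end

theory Submission
  imports Defs HOL.Modules
begin

text \<open>Let \<open>\<psi> = e_D \<circ> \<theta>\<inverse>\<close> and let the convolution algebra of \<open>C\<close> act on \<open>C\<close> by
  \<open>\<rho>_h(c) = c_(1) h(c_(2))\<close>; this is an action, \<open>\<rho>_h \<circ> \<rho>_g = \<rho>_(h * g)\<close> and \<open>\<rho>_e_C = id\<close>,
  by coassociativity and counitality. Applying \<open>x \<otimes> y \<mapsto> x \<psi>(y)\<close> to the left \<open>D\<close>-colinearity of \<open>\<theta>\<close>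
  gives \<open>r \<circ> \<rho>_\<psi> \<circ> \<theta> = id\<close>. If \<open>g\<close> is a right convolution inverse of \<open>\<psi>\<close>, then every \<open>c\<close>
  equals \<open>\<rho>_\<psi>(\<theta> w)\<close> for \<open>w = \<theta>\<inverse>(\<rho>_g c)\<close>, so \<open>\<rho>_\<psi> \<circ> \<theta>\<close> is also a left inverse of \<open>r\<close>.
  Thus the coring map \<open>r\<close> is bijective, and the inverse of a bijective coring map is a coring map.\<close>

lemma isc_plus1: "isc (n + 1) x = isc n x + x"
proof (cases "0 \<le> n")
  case True
  then have "nat (n + 1) = Suc (nat n)" by simp
  then show ?thesis using True by (simp add: isc_def)
next
  case False
  then have e: "nat (- n) = Suc (nat (- n - 1))" by simp
  have "isc (n + 1) x = - (\<Sum>i<nat (- n - 1). x)"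
    using False by (cases "n = -1") (auto simp: isc_def)
  then show ?thesis using False e by (simp add: isc_def)
qed

lemma isc_0 [simp]: "isc 0 x = 0"
  by (simp add: isc_def)

lemma isc_1 [simp]: "isc 1 x = x"
  using isc_plus1[of 0 x] by simp

lemma isc_add: "isc (m + n) x = isc m x + isc n x"
proof (induction n rule: int_induct[where k = 0])
  case base then show ?case by simp
next
  case (step1 i) then show ?case by (metis add.assoc isc_plus1)
next
  case (step2 i)
  then show ?case
    using isc_plus1[of "m + (i - 1)" x] isc_plus1[of "i - 1" x] by (simp add: algebra_simps)
qed

lemma isc_uminus: "isc (- n) x = - isc n x"
  using isc_add[of n "- n" x] by (simp add: eq_neg_iff_add_eq_0 add.commute)

lemma additive_isc: "additive (isc n)"
  by unfold_locales (simp add: isc_def sum.distrib)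

lemma additive_isc_commute: "additive g \<Longrightarrow> g (isc n x) = isc n (g x)"
  unfolding isc_def by (simp add: additive.sum additive.minus)

lemma isc_zero_right [simp]: "isc n 0 = 0"
  by (rule additive.zero[OF additive_isc])

lemma isc_int: "isc n (m :: int) = n * m"
proof (induction n rule: int_induct[where k = 0])
  case base then show ?case by simp
next
  case (step1 i) then show ?case using isc_plus1[of i m] by (simp add: distrib_right)
next
  case (step2 i) then show ?case using isc_plus1[of "i - 1" m] by (simp add: algebra_simps)
qed

lemma isc_mult: "isc (n * m) x = isc n (isc m x)"
proof (induction n rule: int_induct[where k = 0])
  case base then show ?case by simp
next
  case (step1 i) then show ?case by (simp add: isc_plus1 distrib_right isc_add)
next
  case (step2 i)
  then show ?case using isc_plus1[of "i - 1" "isc m x"] isc_add[of "(i - 1) * m" m x]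
    by (simp add: algebra_simps)
qed

lemma isc_apply: "(isc n p) w = isc n (p w)"
  using additive_isc_commute[of "\<lambda>q. q w" n p] by (simp add: additive_def)

lemma fsupp_gen [simp]: "fsupp (gen z)"
  unfolding fsupp_def gen_def by simp

lemma fsupp_zero [simp]: "fsupp 0"
  unfolding fsupp_def by simp

lemma fsupp_add: "fsupp p \<Longrightarrow> fsupp q \<Longrightarrow> fsupp (p + q)"
  unfolding fsupp_def by (rule finite_subset[of _ "{z. p z \<noteq> 0} \<union> {z. q z \<noteq> 0}"]) auto

lemma fsupp_uminus: "fsupp p \<Longrightarrow> fsupp (- p)"
  unfolding fsupp_def by simp

lemma fsupp_diff: "fsupp p \<Longrightarrow> fsupp q \<Longrightarrow> fsupp (p - q)"
  using fsupp_add[of p "- q"] fsupp_uminus[of q] by simp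

lemma fsupp_isc: "fsupp p \<Longrightarrow> fsupp (isc n p)"
  unfolding fsupp_def by (rule finite_subset[of _ "{z. p z \<noteq> 0}"]) (auto simp: isc_apply)

lemma fsupp_sum: "finite I \<Longrightarrow> (\<And>i. i \<in> I \<Longrightarrow> fsupp (q i)) \<Longrightarrow> fsupp (\<Sum>i\<in>I. q i)"
  by (induction I rule: finite_induct) (auto intro: fsupp_add)

lemma fsum_superset:
  assumes "finite S" "{z. p z \<noteq> 0} \<subseteq> S"
  shows "fsum p h = (\<Sum>z\<in>S. isc (p z) (h z))"
  unfolding fsum_def using assms by (intro sum.mono_neutral_left) auto

lemma fsum_zero [simp]: "fsum 0 h = 0"
  unfolding fsum_def by simp

lemma fsum_gen [simp]: "fsum (gen z) h = h z"
proof -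
  have "{w. gen z w \<noteq> 0} = {z}" by (auto simp: gen_def)
  then show ?thesis unfolding fsum_def by (simp add: gen_def)
qed

lemma fsum_add:
  assumes "fsupp p" "fsupp q"
  shows "fsum (p + q) h = fsum p h + fsum q h"
proof -
  let ?S = "{z. p z \<noteq> 0} \<union> {z. q z \<noteq> 0}"
  have S: "finite ?S" using assms unfolding fsupp_def by simp
  have "fsum (p + q) h = (\<Sum>z\<in>?S. isc (p z) (h z)) + (\<Sum>z\<in>?S. isc (q z) (h z))"
    by (subst fsum_superset[OF S]) (auto simp: isc_add sum.distrib)
  also have "\<dots> = fsum p h + fsum q h"
    by (subst (1 2) fsum_superset[OF S]) auto
  finally show ?thesis .
qed

lemma fsum_uminus: "fsum (- p) h = - fsum p h"
  unfolding fsum_def by (simp add: isc_uminus sum_negf)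

lemma fsum_diff: "fsupp p \<Longrightarrow> fsupp q \<Longrightarrow> fsum (p - q) h = fsum p h - fsum q h"
  using fsum_add[of p "- q" h] fsupp_uminus[of q] by (simp add: fsum_uminus)

lemma fsum_isc:
  assumes "fsupp p"
  shows "fsum (isc n p) h = isc n (fsum p h)"
proof -
  have S: "finite {z. p z \<noteq> 0}" using assms unfolding fsupp_def .
  have "fsum (isc n p) h = (\<Sum>z | p z \<noteq> 0. isc n (isc (p z) (h z)))"
    by (subst fsum_superset[OF S]) (auto simp: isc_apply isc_int isc_mult)
  then show ?thesis
    unfolding fsum_def by (simp add: additive.sum[OF additive_isc])
qed

lemma fsum_sum:
  "finite I \<Longrightarrow> (\<And>i. i \<in> I \<Longrightarrow> fsupp (q i)) \<Longrightarrow> fsum (\<Sum>i\<in>I. q i) h = (\<Sum>i\<in>I. fsum (q i) h)"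
  by (induction I rule: finite_induct) (simp_all add: fsum_add fsupp_sum)

lemma additive_fsum_commute: "additive g \<Longrightarrow> g (fsum p h) = fsum p (\<lambda>z. g (h z))"
  unfolding fsum_def by (simp add: additive.sum additive_isc_commute)

lemma fsum_apply: "(fsum p k) w = fsum p (\<lambda>z. k z w)"
  using additive_fsum_commute[of "\<lambda>q. q w" p k] by (simp add: additive_def)

lemma fsupp_fsum: "fsupp p \<Longrightarrow> (\<And>z. fsupp (k z)) \<Longrightarrow> fsupp (fsum p k)"
  unfolding fsum_def fsupp_def[of p] by (auto intro: fsupp_sum fsupp_isc)

lemma fsum_fsum:
  assumes "fsupp p" "\<And>z. fsupp (k z)"
  shows "fsum (fsum p k) h = fsum p (\<lambda>z. fsum (k z) h)"
  using assms unfolding fsum_def[of p] fsupp_def[of p]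
  by (simp add: fsum_sum fsupp_isc fsum_isc)

lemma fsum_gen_id: "fsupp p \<Longrightarrow> fsum p gen = p"
proof
  fix w assume "fsupp p"
  have "fsum p gen w = fsum p (\<lambda>z. gen z w)"
    by (rule fsum_apply)
  also have "\<dots> = (\<Sum>z | p z \<noteq> 0. if w = z then p z else 0)"
    unfolding fsum_def gen_def by (intro sum.cong) (auto simp: isc_int)
  also have "\<dots> = p w"
    using \<open>fsupp p\<close> by (subst sum.delta') (auto simp: fsupp_def)
  finally show "fsum p gen w = p w" .
qed

definition tens_balanced ::
    "('m::ab_group_add \<Rightarrow> 'a \<Rightarrow> 'm) \<Rightarrow> ('a \<Rightarrow> 'n::ab_group_add \<Rightarrow> 'n) \<Rightarrow> ('m \<times> 'n \<Rightarrow> 'x::ab_group_add) \<Rightarrow> bool"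
  where "tens_balanced ra la h \<longleftrightarrow>
     (\<forall>x x' y. h (x + x', y) = h (x, y) + h (x', y)) \<and>
     (\<forall>x y y'. h (x, y + y') = h (x, y) + h (x, y')) \<and>
     (\<forall>x a y. h (ra x a, y) = h (x, la a y))"

definition tens3_balanced ::
    "('m::ab_group_add \<Rightarrow> 'a \<Rightarrow> 'm) \<Rightarrow> ('a \<Rightarrow> 'm \<Rightarrow> 'm) \<Rightarrow> ('m \<times> 'm \<times> 'm \<Rightarrow> 'x::ab_group_add) \<Rightarrow> bool"
  where "tens3_balanced ra la h \<longleftrightarrow>
     (\<forall>x x' y z. h (x + x', y, z) = h (x, y, z) + h (x', y, z)) \<and>
     (\<forall>x y y' z. h (x, y + y', z) = h (x, y, z) + h (x, y', z)) \<and>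
     (\<forall>x y z z'. h (x, y, z + z') = h (x, y, z) + h (x, y, z')) \<and>
     (\<forall>x a y z. h (ra x a, y, z) = h (x, la a y, z)) \<and>
     (\<forall>x a y z. h (x, ra y a, z) = h (x, y, la a z))"

text \<open>The rules of \<open>tens_rel\<close> and \<open>tens3_rel\<close> come with eta-expanded differences.\<close>

lemma fsupp_zero_eta [simp]: "fsupp (\<lambda>x. 0)"
  unfolding fsupp_def by simp

lemma fsupp_diff_eta: "fsupp p \<Longrightarrow> fsupp q \<Longrightarrow> fsupp (\<lambda>x. p x - q x)"
  using fsupp_diff[of p q] by (simp add: fun_diff_def)

lemma fsum_diff_eta: "fsupp p \<Longrightarrow> fsupp q \<Longrightarrow> fsum (\<lambda>x. p x - q x) h = fsum p h - fsum q h"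
  using fsum_diff[of p q h] by (simp add: fun_diff_def)

lemma tens_rel_fsupp: "p \<in> tens_rel ra la \<Longrightarrow> fsupp p"
  by (induction rule: tens_rel.induct) (auto intro!: fsupp_diff_eta)

lemma tens3_rel_fsupp: "p \<in> tens3_rel ra la \<Longrightarrow> fsupp p"
  by (induction rule: tens3_rel.induct) (auto intro!: fsupp_diff_eta)

lemma fsum_tens_rel: "p \<in> tens_rel ra la \<Longrightarrow> tens_balanced ra la h \<Longrightarrow> fsum p h = 0"
  by (induction rule: tens_rel.induct)
    (simp_all add: fsum_diff_eta fsupp_diff_eta fsum_diff fsupp_diff tens_rel_fsupp tens_balanced_def)

lemma fsum_tens3_rel: "p \<in> tens3_rel ra la \<Longrightarrow> tens3_balanced ra la h \<Longrightarrow> fsum p h = 0"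
  by (induction rule: tens3_rel.induct)
    (simp_all add: fsum_diff_eta fsupp_diff_eta fsum_diff fsupp_diff tens3_rel_fsupp tens3_balanced_def)

lemma fsum_eq_if_tens_rel:
  "p - q \<in> tens_rel ra la \<Longrightarrow> fsupp p \<Longrightarrow> fsupp q \<Longrightarrow> tens_balanced ra la h \<Longrightarrow> fsum p h = fsum q h"
  using fsum_tens_rel[of "p - q" ra la h] by (simp add: fsum_diff)

lemma fsum_eq_if_tens3_rel:
  "p - q \<in> tens3_rel ra la \<Longrightarrow> fsupp p \<Longrightarrow> fsupp q \<Longrightarrow> tens3_balanced ra la h \<Longrightarrow> fsum p h = fsum q h"
  using fsum_tens3_rel[of "p - q" ra la h] by (simp add: fsum_diff)

lemma fsupp_map_tens: "fsupp p \<Longrightarrow> fsupp (map_tens f g p)"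
  unfolding map_tens_def by (rule fsupp_fsum) (simp_all add: case_prod_unfold)

lemma fsum_map_tens: "fsupp p \<Longrightarrow> fsum (map_tens f g p) h = fsum p (\<lambda>(x, y). h (f x, g y))"
  unfolding map_tens_def by (subst fsum_fsum) (simp_all add: case_prod_unfold)

lemma map_tens_diff:
  "fsupp p \<Longrightarrow> fsupp q \<Longrightarrow> map_tens f g (p - q) = map_tens f g p - map_tens f g q"
  unfolding map_tens_def by (rule fsum_diff)

lemma map_tens_comp:
  "fsupp p \<Longrightarrow> map_tens f g (map_tens f' g' p) = map_tens (f \<circ> f') (g \<circ> g') p"
  by (simp add: fsum_map_tens map_tens_def[of f g] map_tens_def[of "f \<circ> f'"] case_prod_unfold)

lemma map_tens_id: "fsupp p \<Longrightarrow> map_tens id id p = p"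
  unfolding map_tens_def by (simp add: fsum_gen_id[unfolded case_prod_eta] case_prod_Pair_iden)

lemma tens_ract_eq_map_tens: "tens_ract ra p a = map_tens id (\<lambda>y. ra y a) p"
  by (simp add: tens_ract_def map_tens_def)

lemma map_tens_tens_rel:
  assumes "bimod_map laM raM laM' raM' f" and "bimod_map laN raN laN' raN' g"
  shows "p \<in> tens_rel raM laN \<Longrightarrow> map_tens f g p \<in> tens_rel raM' laN'"
proof (induction rule: tens_rel.induct)
  case tr_zero
  then show ?case by (simp add: map_tens_def zero_fun_def[symmetric] tens_rel.tr_zero)
next
  case (tr_diff p q)
  then show ?case
    using map_tens_diff[OF tens_rel_fsupp tens_rel_fsupp, OF tr_diff.hyps, of f g]
      tens_rel.tr_diff[OF tr_diff.IH]
    by (simp add: fun_diff_def)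
next
  case (tr_addl x x' y)
  then show ?case using assms tens_rel.tr_addl[of "f x" "f x'" "g y" raM' laN']
    by (simp add: fsum_diff_eta fsupp_diff_eta map_tens_def bimod_map_def fun_diff_def)
next
  case (tr_addr x y y')
  then show ?case using assms tens_rel.tr_addr[of "f x" "g y" "g y'" raM' laN']
    by (simp add: fsum_diff_eta fsupp_diff_eta map_tens_def bimod_map_def fun_diff_def)
next
  case (tr_bal x a y)
  then show ?case using assms tens_rel.tr_bal[of raM' "f x" a "g y" laN']
    by (simp add: fsum_diff_eta fsupp_diff_eta map_tens_def bimod_map_def fun_diff_def)
qed

lemma tens_balanced_ract_hom:
  assumes "bimodule la ra" and "bimod_map laN raN (*) (*) h"
  shows "tens_balanced ra laN (\<lambda>(x, y). ra x (h y))"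
  using assms by (simp add: tens_balanced_def bimodule_def bimod_map_def)

lemma is_coring_bimodule: "is_coring C \<Longrightarrow> bimodule (lact C) (ract C)"
  by (simp add: is_coring_def)

lemma is_coring_fsupp_comul: "is_coring C \<Longrightarrow> fsupp (comul C c)"
  by (simp add: is_coring_def)

lemma tens_balanced_coring_hom:
  "is_coring C \<Longrightarrow> h \<in> hom_AA C \<Longrightarrow> tens_balanced (ract C) (lact C) (\<lambda>(x, y). ract C x (h y))"
  using tens_balanced_ract_hom[OF is_coring_bimodule, of C "lact C" "ract C" h] by (simp add: hom_AA_def)

definition coring_dual_ract :: "('a::ring_1, 'c::ab_group_add) coring \<Rightarrow> ('c \<Rightarrow> 'a) \<Rightarrow> 'c \<Rightarrow> 'c" where
  "coring_dual_ract C h c = fsum (comul C c) (\<lambda>(x, y). ract C x (h y))"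

lemma coring_dual_ract_counit: "is_coring C \<Longrightarrow> coring_dual_ract C (counit C) c = c"
  by (simp add: coring_dual_ract_def is_coring_def)

lemma additive_coring_dual_ract:
  assumes "is_coring C" and "h \<in> hom_AA C"
  shows "additive (coring_dual_ract C h)"
proof
  fix x y
  have "fsum (comul C (x + y) - comul C x - comul C y) (\<lambda>(u, v). ract C u (h v)) = 0"
    using assms(1) by (intro fsum_tens_rel[OF _ tens_balanced_coring_hom[OF assms]]) (simp add: is_coring_def)
  then have "coring_dual_ract C h (x + y) - coring_dual_ract C h x - coring_dual_ract C h y = 0"
    using is_coring_fsupp_comul[OF assms(1)] by (simp add: coring_dual_ract_def fsum_diff fsupp_diff)
  then show "coring_dual_ract C h (x + y) = coring_dual_ract C h x + coring_dual_ract C h y"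
    by (simp add: diff_diff_eq)
qed

lemma coring_dual_ract_ract:
  assumes C: "is_coring C" and h: "h \<in> hom_AA C"
  shows "coring_dual_ract C h (ract C x a) = ract C (coring_dual_ract C h x) a"
proof -
  have bm: "bimodule (lact C) (ract C)" and fs: "\<And>c. fsupp (comul C c)"
    using C by (simp_all add: is_coring_bimodule is_coring_fsupp_comul)
  have hbm: "bimod_map (lact C) (ract C) (*) (*) h"
    using h by (simp add: hom_AA_def)
  have "comul C (ract C x a) - map_tens id (\<lambda>y. ract C y a) (comul C x) \<in> tens_rel (ract C) (lact C)"
    using C by (simp add: is_coring_def tens_ract_eq_map_tens)
  then have "coring_dual_ract C h (ract C x a)
      = fsum (map_tens id (\<lambda>y. ract C y a) (comul C x)) (\<lambda>(u, v). ract C u (h v))"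
    unfolding coring_dual_ract_def
    by (rule fsum_eq_if_tens_rel) (simp_all add: fs fsupp_map_tens tens_balanced_coring_hom C h)
  also have "\<dots> = fsum (comul C x) (\<lambda>z. ract C ((\<lambda>(u, v). ract C u (h v)) z) a)"
    using bm hbm by (simp add: fsum_map_tens fs bimodule_def bimod_map_def case_prod_unfold)
  also have "\<dots> = ract C (coring_dual_ract C h x) a"
    unfolding coring_dual_ract_def
    by (rule additive_fsum_commute[symmetric]) (use bm in \<open>simp add: additive_def bimodule_def\<close>)
  finally show ?thesis .
qed

lemma coring_dual_ract_conv:
  assumes C: "is_coring C" and h: "h \<in> hom_AA C" and g: "g \<in> hom_AA C"
  shows "coring_dual_ract C h (coring_dual_ract C g c) = coring_dual_ract C (conv C h g) c"
proof -
  have bm: "bimodule (lact C) (ract C)" and fs: "\<And>c. fsupp (comul C c)"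
    using C by (simp_all add: is_coring_bimodule is_coring_fsupp_comul)
  have ract_additive: "additive (\<lambda>z. ract C z a)" "additive (ract C x)" for x a
    using bm by (simp_all add: additive_def bimodule_def)
  let ?H = "\<lambda>(u, v, w). ract C (ract C u (h v)) (g w)"
  have bal: "tens3_balanced (ract C) (lact C) ?H"
    using h g bm by (simp add: tens3_balanced_def hom_AA_def bimod_map_def bimodule_def mult.assoc)
  have "coring_dual_ract C h (coring_dual_ract C g c)
      = fsum (comul C c) (\<lambda>(x, y). ract C (coring_dual_ract C h x) (g y))"
    unfolding coring_dual_ract_def[of C g]
    by (simp add: additive_fsum_commute[OF additive_coring_dual_ract[OF C h]]
        coring_dual_ract_ract[OF C h] case_prod_unfold)
  also have "\<dots> = fsum (comul C c) (\<lambda>(x, y). fsum (comul C x) (\<lambda>(u, v). ?H (u, v, y)))"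
    unfolding coring_dual_ract_def
    by (simp add: additive_fsum_commute[OF ract_additive(1)] case_prod_unfold)
  also have "\<dots> = fsum (fsum (comul C c) (\<lambda>(x, y). fsum (comul C x) (\<lambda>(u, v). gen (u, v, y)))) ?H"
    by (simp add: fsum_fsum fsupp_fsum fs case_prod_unfold)
  also have "\<dots> = fsum (fsum (comul C c) (\<lambda>(x, y). fsum (comul C y) (\<lambda>(u, v). gen (x, u, v)))) ?H"
    using C bal by (intro fsum_eq_if_tens3_rel) (simp_all add: is_coring_def fsupp_fsum fs case_prod_unfold)
  also have "\<dots> = fsum (comul C c) (\<lambda>(x, y). fsum (comul C y) (\<lambda>(u, v). ract C x (h u * g v)))"
    using bm by (simp add: fsum_fsum fsupp_fsum fs bimodule_def case_prod_unfold)
  also have "\<dots> = coring_dual_ract C (conv C h g) c"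
    unfolding coring_dual_ract_def conv_def
    by (simp add: additive_fsum_commute[OF ract_additive(2)] case_prod_unfold)
  finally show ?thesis .
qed

lemma twisting_datum_r_coring_dual_ract:
  assumes tw: "twisting_datum C D l r \<theta>" and \<psi>: "counit D \<circ> inv \<theta> \<in> hom_AA C"
  shows "r (coring_dual_ract C (counit D \<circ> inv \<theta>) (\<theta> d)) = d"
proof -
  have C: "is_coring C" and D: "is_coring D" and "bij \<theta>"
    and r: "bimod_map (lact C) (ract C) (lact D) (ract D) r"
    and left_colinear: "map_tens id \<theta> (comul D d) - map_tens r id (comul C (\<theta> d)) \<in> tens_rel (ract D) (lact C)"
    using tw by (simp_all add: twisting_datum_def coring_map_def)
  let ?h = "\<lambda>(x, y). ract D x ((counit D \<circ> inv \<theta>) y)"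
  have bal: "tens_balanced (ract D) (lact C) ?h"
    using tens_balanced_ract_hom[OF is_coring_bimodule[OF D], of "lact C" "ract C" "counit D \<circ> inv \<theta>"] \<psi>
    unfolding hom_AA_def by blast
  have "d = fsum (map_tens id \<theta> (comul D d)) ?h"
    using D \<open>bij \<theta>\<close> by (simp add: fsum_map_tens is_coring_fsupp_comul bij_is_inj is_coring_def)
  also have "\<dots> = fsum (map_tens r id (comul C (\<theta> d))) ?h"
    using left_colinear C D bal
    by (intro fsum_eq_if_tens_rel) (simp_all add: fsupp_map_tens is_coring_fsupp_comul)
  also have "\<dots> = r (coring_dual_ract C (counit D \<circ> inv \<theta>) (\<theta> d))"
    using r C unfolding coring_dual_ract_def
    by (simp add: fsum_map_tens is_coring_fsupp_comul additive_fsum_commute bimod_map_def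
        additive_def case_prod_unfold)
  finally show ?thesis by simp
qed

lemma twisting_datum_bij_r:
  assumes tw: "twisting_datum C D l r \<theta>" and "conv_invertible C (counit D \<circ> inv \<theta>)"
  shows "bij r"
proof -
  let ?\<psi> = "counit D \<circ> inv \<theta>"
  let ?s = "\<lambda>d. coring_dual_ract C ?\<psi> (\<theta> d)"
  obtain g where \<psi>: "?\<psi> \<in> hom_AA C" and g: "g \<in> hom_AA C" and \<psi>g: "conv C ?\<psi> g = counit C"
    using assms(2) unfolding conv_invertible_def by blast
  have C: "is_coring C" and "surj \<theta>"
    using tw by (simp_all add: twisting_datum_def bij_is_surj)
  have r_s: "r (?s d) = d" for d
    by (rule twisting_datum_r_coring_dual_ract[OF tw \<psi>])
  have s_r: "?s (r c) = c" for c
  proof -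
    obtain w where w: "coring_dual_ract C g c = \<theta> w"
      using \<open>surj \<theta>\<close> by (metis surjD)
    have c: "c = ?s w"
      using coring_dual_ract_conv[OF C \<psi> g, of c] by (simp add: \<psi>g coring_dual_ract_counit[OF C] w)
    then have "r c = w" using r_s by simp
    then show ?thesis using c by simp
  qed
  show ?thesis
    by (rule o_bij[of ?s]) (simp_all add: fun_eq_iff r_s s_r)
qed

lemma bimod_map_inv:
  assumes "bimod_map laM raM laN raN f" and "bij f"
  shows "bimod_map laN raN laM raM (inv f)"
proof -
  have inv_eq: "inv f y = x \<longleftrightarrow> y = f x" for x y
    using bij_inv_eq_iff[OF \<open>bij f\<close>] by metis
  show ?thesis
    using assms(1) \<open>bij f\<close> unfolding bimod_map_def inv_eq by (simp add: bij_inv_eq_iff bij_is_surj surj_f_inv_f)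
qed

lemma coring_map_inv:
  assumes C: "is_coring C" and D: "is_coring D" and f: "coring_map C D f" and "bij f"
  shows "coring_map D C (inv f)"
proof -
  have fbm: "bimod_map (lact C) (ract C) (lact D) (ract D) f"
    using f by (simp add: coring_map_def)
  then have gbm: "bimod_map (lact D) (ract D) (lact C) (ract C) (inv f)"
    using \<open>bij f\<close> by (rule bimod_map_inv)
  have f_inv: "f (inv f d) = d" and inv_f: "inv f (f c) = c" for c d
    using \<open>bij f\<close> by (simp_all add: bij_is_surj bij_is_inj surj_f_inv_f)
  have "map_tens (inv f) (inv f) (comul D d) - comul C (inv f d) \<in> tens_rel (ract C) (lact C)" for d
  proof -
    let ?c = "inv f d"
    have "map_tens f f (comul C ?c) - comul D d \<in> tens_rel (ract D) (lact D)"
      using f f_inv[of d] unfolding coring_map_def by metis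
    then have "map_tens (inv f) (inv f) (map_tens f f (comul C ?c) - comul D d) \<in> tens_rel (ract C) (lact C)"
      by (rule map_tens_tens_rel[OF gbm gbm])
    moreover have "map_tens (inv f) (inv f) (map_tens f f (comul C ?c) - comul D d)
        = comul C ?c - map_tens (inv f) (inv f) (comul D d)"
      using C D by (simp add: map_tens_diff map_tens_comp fsupp_map_tens is_coring_fsupp_comul
          comp_def inv_f map_tens_id[unfolded id_def])
    ultimately show ?thesis
      using tens_rel.tr_diff[OF tens_rel.tr_zero] by fastforce
  qed
  moreover have "counit C (inv f d) = counit D d" for d
    using f f_inv[of d] unfolding coring_map_def by metis
  ultimately show ?thesis
    using gbm by (simp add: coring_map_def)
qed

theorem lemma5p1:
  fixes C :: "('a::ring_1, 'c::ab_group_add) coring"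
    and D :: "('a, 'd::ab_group_add) coring"
    and l :: "'d \<Rightarrow> 'c" and r :: "'c \<Rightarrow> 'd" and \<theta> :: "'d \<Rightarrow> 'c"
  assumes "twisting_datum C D l r \<theta>"
    and "conv_invertible C (counit D \<circ> inv \<theta>)"
    and "conv_invertible D (counit C \<circ> \<theta>)"
  shows "\<exists>f :: 'c \<Rightarrow> 'd. coring_map C D f \<and> coring_map D C (inv f) \<and> bij f"
proof -
  have "is_coring C" "is_coring D" "coring_map C D r"
    using assms(1) by (simp_all add: twisting_datum_def)
  moreover have "bij r"
    using assms(1,2) by (rule twisting_datum_bij_r)
  ultimately show ?thesis
    using coring_map_inv by blast
qed

end
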